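(* Let $n\in\mathbb{N}$, $h_0>0$, $h_1,\ldots,h_n\in\mathbb{C}$, and $H(z)\coloneq h_0+2\sum_{k=1}^nh_kz^k$. There is exactly one such polynomial $H$ (for given $h_0$) satisfying all of: $\operatorname{Re}H(z)>0$ for all $z\in\Delta$; $h_n>0$; the zeros of $\operatorname{Re}H$ on the unit circle are exactly the $n$-th roots of $-1$. Namely, $H(z)=h_0(1+z^n)$.
   Context: $\Delta=\{z\in\mathbb{C}:|z|<1\}$ is the open unit disk. *)

theory Defs
  imports Complex_Main
begin

definition Hpoly :: "nat \<Rightarrow> real \<Rightarrow> (nat \<Rightarrow> complex) \<Rightarrow> complex \<Rightarrow> complex" where
  "Hpoly n h0 h z = complex_of_real h0 + 2 * (\<Sum>k=1..n. h k * z ^ k)"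

definition good_H :: "nat \<Rightarrow> real \<Rightarrow> (nat \<Rightarrow> complex) \<Rightarrow> bool" where
  "good_H n h0 h \<longleftrightarrow>
     (\<forall>z. norm z < 1 \<longrightarrow> Re (Hpoly n h0 h z) > 0) \<and>
     (h n \<in> \<real> \<and> Re (h n) > 0) \<and>
     {z. norm z = 1 \<and> Re (Hpoly n h0 h z) = 0} = {z. z ^ n = -1}"

end

theory Submission
  imports Defs "HOL-Analysis.Analysis"
begin

text \<open>Write H(z) = c 0 + c 1 z + ... + c n z^n. Since Re H \<ge> 0 on the unit circle and vanishes at every
  root \<omega> of z^n = -1, each such \<omega> is a minimum of t \<mapsto> Re H(\<omega> e^(it)), so both Re H(\<omega>) and
  Im (\<omega> H'(\<omega>)) vanish. As cnj (\<omega>^k) = -\<omega>^(n-k), each of these conditions says that a polynomial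
  of degree n vanishes at all n roots; reduced modulo z^n + 1 it has degree < n, so all its
  coefficients vanish. This gives c k = cnj (c (n-k)) and k c k + (n-k) cnj (c (n-k)) = 0 for
  0 < k < n, hence c k = 0, and c n = c 0 = h0.\<close>

lemma norm_eq_1_if_power_eq_minus_1:
  fixes \<omega> :: complex
  assumes "\<omega> ^ n = -1"
  shows "norm \<omega> = 1"
proof -
  have "n \<noteq> 0" using assms by (rule contrapos_pn) simp
  moreover have "norm \<omega> ^ n = 1 ^ n" using assms by (simp flip: norm_power)
  ultimately show ?thesis by (simp add: power_eq_imp_eq_base)
qed

lemma cnj_power_if_power_eq_minus_1:
  fixes \<omega> :: complex
  assumes "\<omega> ^ n = -1" "k \<le> n"
  shows "cnj (\<omega> ^ k) = - (\<omega> ^ (n - k))"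
proof -
  have "\<omega> * cnj \<omega> = 1"
    using norm_eq_1_if_power_eq_minus_1[OF assms(1)] by (simp add: complex_norm_square[symmetric])
  then have "cnj (\<omega> ^ k) = \<omega> ^ n * cnj \<omega> ^ k * -1"
    using assms by simp
  also have "\<omega> ^ n * cnj \<omega> ^ k = \<omega> ^ (n - k) * (\<omega> * cnj \<omega>) ^ k"
    using assms(2) by (simp add: power_mult_distrib mult.assoc flip: power_add)
  finally show ?thesis using \<open>\<omega> * cnj \<omega> = 1\<close> by simp
qed

lemma cnj_polyfun_if_power_eq_minus_1:
  fixes \<omega> :: complex
  assumes "\<omega> ^ n = -1"
  shows "cnj (\<Sum>k\<le>n. c k * \<omega> ^ k) = - (\<Sum>k\<le>n. cnj (c (n - k)) * \<omega> ^ k)"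
proof -
  have "cnj (\<Sum>k\<le>n. c k * \<omega> ^ k) = - (\<Sum>k\<le>n. cnj (c k) * \<omega> ^ (n - k))"
    using cnj_power_if_power_eq_minus_1[OF assms] by (simp add: sum_negf flip: complex_cnj_power)
  also have "(\<Sum>k\<le>n. cnj (c k) * \<omega> ^ (n - k)) = (\<Sum>k\<le>n. cnj (c (n - k)) * \<omega> ^ k)"
    by (rule sum.reindex_bij_witness[where i="\<lambda>k. n - k" and j="\<lambda>k. n - k"]) auto
  finally show ?thesis .
qed

lemma polyfun_add_cnj_if_power_eq_minus_1:
  fixes \<omega> :: complex
  assumes "\<omega> ^ n = -1"
  shows "(\<Sum>k\<le>n. (c k - cnj (c (n - k))) * \<omega> ^ k) = of_real (2 * Re (\<Sum>k\<le>n. c k * \<omega> ^ k))"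
proof -
  have "(\<Sum>k\<le>n. (c k - cnj (c (n - k))) * \<omega> ^ k)
      = (\<Sum>k\<le>n. c k * \<omega> ^ k) + cnj (\<Sum>k\<le>n. c k * \<omega> ^ k)"
    unfolding cnj_polyfun_if_power_eq_minus_1[OF assms] by (simp add: left_diff_distrib sum_subtractf)
  then show ?thesis by (simp only: complex_add_cnj)
qed

lemma polyfun_diff_cnj_if_power_eq_minus_1:
  fixes \<omega> :: complex
  assumes "\<omega> ^ n = -1"
  shows "(\<Sum>k\<le>n. (c k + cnj (c (n - k))) * \<omega> ^ k) = of_real (2 * Im (\<Sum>k\<le>n. c k * \<omega> ^ k)) * \<i>"
proof -
  have "(\<Sum>k\<le>n. (c k + cnj (c (n - k))) * \<omega> ^ k)
      = (\<Sum>k\<le>n. c k * \<omega> ^ k) - cnj (\<Sum>k\<le>n. c k * \<omega> ^ k)"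
    unfolding cnj_polyfun_if_power_eq_minus_1[OF assms] by (simp add: distrib_right sum.distrib)
  then show ?thesis by (simp only: complex_diff_cnj)
qed

lemma polyfun_eq_0_if_card_roots_gt:
  fixes c :: "nat \<Rightarrow> 'a::{comm_ring,real_normed_div_algebra}"
  assumes "m < card S" "\<And>z. z \<in> S \<Longrightarrow> (\<Sum>i\<le>m. c i * z ^ i) = 0" "k \<le> m"
  shows "c k = 0"
proof (rule ccontr)
  assume "c k \<noteq> 0"
  then have "\<exists>k\<le>m. c k \<noteq> 0" using assms(3) by blast
  then have "card S \<le> card {z. (\<Sum>i\<le>m. c i * z ^ i) = 0}"
    using assms(2) by (intro card_mono polyfun_rootbound_finite) auto
  also have "\<dots> \<le> m" by (rule polyfun_rootbound_card) fact
  finally show False using assms(1) by simp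
qed

lemma polyfun_reduce_if_power_eq_minus_1:
  fixes \<omega> :: complex
  assumes "\<omega> ^ Suc m = -1"
  shows "(\<Sum>k\<le>Suc m. c k * \<omega> ^ k) = (\<Sum>k\<le>m. (c k - (if k = 0 then c (Suc m) else 0)) * \<omega> ^ k)"
  using assms by (simp add: left_diff_distrib sum_subtractf if_distrib[of "\<lambda>x. x * _"] cong: if_cong)

lemma polyfun_coeffs_if_vanishing_on_roots_minus_1:
  fixes c :: "nat \<Rightarrow> complex"
  assumes "\<forall>\<omega>. \<omega> ^ n = -1 \<longrightarrow> (\<Sum>k\<le>n. c k * \<omega> ^ k) = 0"
  shows "c 0 = c n" and "\<And>k. 0 < k \<Longrightarrow> k < n \<Longrightarrow> c k = 0"
proof -
  have "c 0 = c n \<and> (\<forall>k. 0 < k \<and> k < n \<longrightarrow> c k = 0)"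
  proof (cases n)
    case (Suc m)
    define d where "d k = c k - (if k = 0 then c n else 0)" for k
    have "d k = 0" if "k \<le> m" for k
    proof (rule polyfun_eq_0_if_card_roots_gt[where S = "{\<omega>. \<omega> ^ n = -1}"])
      show "m < card {\<omega>::complex. \<omega> ^ n = -1}" using card_nth_roots[of "-1" n] Suc by simp
      show "(\<Sum>k\<le>m. d k * \<omega> ^ k) = 0" if "\<omega> \<in> {\<omega>. \<omega> ^ n = -1}" for \<omega>
        using that assms polyfun_reduce_if_power_eq_minus_1[of \<omega> m c] by (simp add: Suc d_def cong: if_cong)
    qed fact
    then show ?thesis using Suc by (auto simp: d_def less_Suc_eq_le split: if_splits)
  qed simp
  then show "c 0 = c n" and "\<And>k. 0 < k \<Longrightarrow> k < n \<Longrightarrow> c k = 0" by auto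
qed

text \<open>The sum in the conclusion is w p'(w), and -Im (w p'(w)) is the derivative at 0 of
  t \<mapsto> Re p(w e^(it)), which has a minimum there.\<close>

lemma Im_polyfun_deriv_eq_0_at_circle_min:
  fixes c :: "nat \<Rightarrow> complex"
  assumes nonneg: "\<And>z. norm z = 1 \<Longrightarrow> 0 \<le> Re (\<Sum>k\<le>n. c k * z ^ k)"
    and "norm w = 1" and zero: "Re (\<Sum>k\<le>n. c k * w ^ k) = 0"
  shows "Im (\<Sum>k\<le>n. of_nat k * c k * w ^ k) = 0"
proof -
  define a where "a k = c k * w ^ k" for k
  define f where "f t = (\<Sum>k\<le>n. Re (a k) * cos (real k * t) - Im (a k) * sin (real k * t))" for t
  have f_eq: "f t = Re (\<Sum>k\<le>n. c k * (w * cis t) ^ k)" for t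
  proof -
    have "c k * (w * cis t) ^ k = a k * cis (real k * t)" for k
      by (simp add: a_def power_mult_distrib Complex.DeMoivre mult.assoc)
    then show ?thesis by (simp add: f_def Re_sum)
  qed
  have "f 0 \<le> f t" for t
    using zero nonneg[of "w * cis t"] \<open>norm w = 1\<close> by (simp add: f_eq norm_mult)
  moreover have "(f has_real_derivative - (\<Sum>k\<le>n. real k * Im (a k))) (at 0)"
    unfolding f_def[abs_def]
    by (auto intro!: derivative_eq_intros simp: sum_negf)
  ultimately have "(\<Sum>k\<le>n. real k * Im (a k)) = 0"
    using DERIV_local_min[of f _ 0 1] by force
  then show ?thesis by (simp add: a_def mult.assoc)
qed

lemma Re_nonneg_on_cball_if_pos_on_ball:
  fixes p :: "'a::real_normed_vector \<Rightarrow> complex"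
  assumes "continuous_on (cball 0 1) p" and "\<And>z. norm z < 1 \<Longrightarrow> 0 < Re (p z)" and "norm z \<le> 1"
  shows "0 \<le> Re (p z)"
proof (rule continuous_ge_on_closure[where S = "ball 0 1" and f = "\<lambda>z. Re (p z)"])
  show "continuous_on (closure (ball 0 1)) (\<lambda>z. Re (p z))"
    using assms(1) by (intro continuous_intros) simp
  show "z \<in> closure (ball 0 1)" using assms(3) by simp
  show "0 \<le> Re (p z)" if "z \<in> ball 0 1" for z
    using assms(2) that by (simp add: less_imp_le)
qed

lemma Hpoly_eq_polyfun:
  "Hpoly n h0 h z = (\<Sum>k\<le>n. (if k = 0 then of_real h0 else 2 * h k) * z ^ k)"
proof -
  have "(\<Sum>k\<le>n. (if k = 0 then of_real h0 else 2 * h k) * z ^ k)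
      = of_real h0 + (\<Sum>k=1..n. (if k = 0 then of_real h0 else 2 * h k) * z ^ k)"
    by (simp add: atMost_atLeast0 sum.atLeast_Suc_atMost)
  also have "(\<Sum>k=1..n. (if k = 0 then of_real h0 else 2 * h k) * z ^ k) = 2 * (\<Sum>k=1..n. h k * z ^ k)"
    by (simp add: sum_distrib_left mult.assoc)
  finally show ?thesis by (simp add: Hpoly_def)
qed

lemma Hpoly_eq_monomial:
  assumes "n \<ge> 1" and "\<And>k. 0 < k \<Longrightarrow> k < n \<Longrightarrow> h k = 0"
  shows "Hpoly n h0 h z = of_real h0 + 2 * h n * z ^ n"
proof -
  have "(\<Sum>k=1..n. h k * z ^ k) = (\<Sum>k=1..n. if k = n then h n * z ^ n else 0)"
    using assms(2) by (intro sum.cong) auto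
  then show ?thesis using assms(1) by (simp add: Hpoly_def mult.assoc)
qed

lemma eq_minus_1_if_norm_eq_1_Re_eq_minus_1:
  fixes w :: complex
  assumes "norm w = 1" and "Re w = -1"
  shows "w = -1"
proof -
  have "Re w ^ 2 + Im w ^ 2 = 1" using assms(1) cmod_power2[of w] by simp
  then show ?thesis using assms(2) by (simp add: complex_eq_iff)
qed

lemma good_H_monomial:
  assumes "n \<ge> 1" and "h0 > 0"
  shows "good_H n h0 (\<lambda>k. if k = n then of_real (h0 / 2) else 0)" (is "good_H n h0 ?h")
proof -
  have Re_H: "Re (Hpoly n h0 ?h z) = h0 * (1 + Re (z ^ n))" for z
    using Hpoly_eq_monomial[of n ?h h0 z] assms(1) by (simp add: algebra_simps)
  have "0 < Re (Hpoly n h0 ?h z)" if "norm z < 1" for z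
  proof -
    have "norm (z ^ n) < 1"
      using that assms(1) by (simp add: norm_power power_less_one_iff)
    then have "-1 < Re (z ^ n)" using abs_Re_le_cmod[of "z ^ n"] by linarith
    then show ?thesis using assms(2) by (simp add: Re_H)
  qed
  moreover have "norm z = 1 \<and> Re (Hpoly n h0 ?h z) = 0 \<longleftrightarrow> z ^ n = -1" for z
  proof
    assume z: "norm z = 1 \<and> Re (Hpoly n h0 ?h z) = 0"
    show "z ^ n = -1"
      using z assms(2) by (intro eq_minus_1_if_norm_eq_1_Re_eq_minus_1) (auto simp: Re_H norm_power)
  next
    assume "z ^ n = -1"
    then show "norm z = 1 \<and> Re (Hpoly n h0 ?h z) = 0"
      by (simp add: Re_H norm_eq_1_if_power_eq_minus_1)
  qed
  ultimately show ?thesis using assms by (simp add: good_H_def)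
qed

lemma good_H_coeffs:
  assumes "n \<ge> 1" and "good_H n h0 h"
  shows "\<And>k. 0 < k \<Longrightarrow> k < n \<Longrightarrow> h k = 0" and "h n = of_real (h0 / 2)"
proof -
  define c where "c k = (if k = 0 then of_real h0 else 2 * h k)" for k
  have H: "Hpoly n h0 h z = (\<Sum>k\<le>n. c k * z ^ k)" for z
    by (simp add: c_def Hpoly_eq_polyfun)
  have nonneg: "0 \<le> Re (\<Sum>k\<le>n. c k * z ^ k)" if "norm z = 1" for z
    using that assms(2)
    by (intro Re_nonneg_on_cball_if_pos_on_ball[where p = "\<lambda>z. \<Sum>k\<le>n. c k * z ^ k"])
      (auto simp: good_H_def H intro!: continuous_intros)
  have zero: "norm \<omega> = 1 \<and> Re (\<Sum>k\<le>n. c k * \<omega> ^ k) = 0" if "\<omega> ^ n = -1" for \<omega>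
    using that assms(2) unfolding good_H_def H by blast
  have "\<forall>\<omega>. \<omega> ^ n = -1 \<longrightarrow> (\<Sum>k\<le>n. (c k - cnj (c (n - k))) * \<omega> ^ k) = 0"
    using zero by (simp add: polyfun_add_cnj_if_power_eq_minus_1 del: Re_sum)
  note sym_coeffs = polyfun_coeffs_if_vanishing_on_roots_minus_1[OF this]
  have sym0: "c 0 - cnj (c n) = c n - cnj (c 0)" using sym_coeffs(1) by simp
  have sym: "c k = cnj (c (n - k))" if "0 < k" "k < n" for k using sym_coeffs(2)[OF that] by simp
  have "Im (\<Sum>k\<le>n. of_nat k * c k * \<omega> ^ k) = 0" if "\<omega> ^ n = -1" for \<omega>
    using zero[OF that] nonneg by (intro Im_polyfun_deriv_eq_0_at_circle_min) auto
  then have "\<forall>\<omega>. \<omega> ^ n = -1 \<longrightarrow>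
      (\<Sum>k\<le>n. (of_nat k * c k + cnj (of_nat (n - k) * c (n - k))) * \<omega> ^ k) = 0"
    using polyfun_diff_cnj_if_power_eq_minus_1[of _ n "\<lambda>k. of_nat k * c k"]
    by (simp del: Im_sum)
  note deriv_coeffs = polyfun_coeffs_if_vanishing_on_roots_minus_1[OF this]
  have deriv0: "cnj (c n) = c n" using deriv_coeffs(1) assms(1) by simp
  have deriv: "of_nat k * c k + of_nat (n - k) * cnj (c (n - k)) = 0" if "0 < k" "k < n" for k
    using deriv_coeffs(2)[OF that] by simp
  show "h k = 0" if "0 < k" "k < n" for k
  proof -
    have "of_nat n * c k = of_nat k * c k + of_nat (n - k) * cnj (c (n - k))"
      using sym[OF that] that by (simp add: of_nat_diff algebra_simps)
    then have "of_nat n * c k = 0" using deriv[OF that] by simp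
    then show ?thesis using that by (simp add: c_def)
  qed
  have "c n = of_real h0" using sym0 deriv0 by (simp add: c_def)
  then show "h n = of_real (h0 / 2)" using assms(1) by (simp add: c_def mult.commute)
qed

theorem mainTheorem6:
  fixes n :: nat and h0 :: real
  assumes "n \<ge> 1" and "h0 > 0"
  shows "(\<exists>h. good_H n h0 h) \<and>
         (\<forall>h. good_H n h0 h \<longrightarrow> (\<forall>z. Hpoly n h0 h z = complex_of_real h0 * (1 + z ^ n)))"
proof
  show "\<exists>h. good_H n h0 h" using good_H_monomial[OF assms] by blast
  show "\<forall>h. good_H n h0 h \<longrightarrow> (\<forall>z. Hpoly n h0 h z = complex_of_real h0 * (1 + z ^ n))"
  proof (intro allI impI)
    fix h z assume "good_H n h0 h"
    from good_H_coeffs[OF assms(1) this] show "Hpoly n h0 h z = complex_of_real h0 * (1 + z ^ n)"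
      using Hpoly_eq_monomial[OF assms(1)] by (simp add: algebra_simps)
  qed
qed

end
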